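(* Let $p\in[1,\infty]$, let $(U_u)_{u\in[0,T]}$ be concave non-decreasing functions $U_u:\mathbb{R}\to[-\infty,+\infty)$ (not identically $-\infty$), and $(B_{tu})_{0\le t\le u\le T}$ real numbers, and let $(\rho^{U,B}_{tu})_{t,u}$ be the associated fully-dynamic shortfall risk measure. If for all $0\le t\le u\le v\le T$ and all $x\in\mathbb{R}$ one has $U_v(x)-B_{tv}\le U_u(x)-B_{tu}$, then $(\rho^{U,B}_{tu})$ satisfies h-longevity: $\rho^{U,B}_{tv}(X)\ge\rho^{U,B}_{tu}(X)$ for all $t\le u\le v$ and $X\in L^p(\mathcal{F}_u)$. If moreover $U_u$ and $B_{tu}$ do not depend on $u$, then $(\rho^{U,B}_{tu})$ satisfies the restriction property $\rho^{U,B}_{tu}(X)=\rho^{U,B}_{tv}(X)$ for all $t\le u\le v$, $X\in L^p(\mathcal{F}_u)$.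
   Context: $(\mathcal{F}_t)_{t\in[0,T]}$ is a filtration on a probability space $(\Omega,\mathcal{F},P)$. The fully-dynamic shortfall risk measure is $$\rho^{U,B}_{tu}(X)=\operatorname{ess.inf}\{m_t\in L^p(\mathcal{F}_t):E[U_u(X+m_t)\mid\mathcal{F}_t]\ge B_{tu}\},\qquad X\in L^p(\mathcal{F}_u),$$ with $\operatorname{ess.inf}\emptyset=+\infty$; conditional expectations are taken in the extended sense in $[-\infty,\infty)$ (the positive part is integrable since a concave function has an affine majorant). *)

theory Defs
  imports "HOL-Probability.Probability"
begin

definition memLp :: "'a measure \<Rightarrow> 'a measure \<Rightarrow> ennreal \<Rightarrow> ('a \<Rightarrow> real) \<Rightarrow> bool" where
  "memLp M G p f \<longleftrightarrow> f \<in> borel_measurable G \<and>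
     (if p = \<infinity> then (\<exists>C. AE x in M. \<bar>f x\<bar> \<le> C)
      else (\<integral>\<^sup>+ x. ennreal (\<bar>f x\<bar> powr enn2real p) \<partial>M) < \<infinity>)"

definition ext_cond_exp :: "'a measure \<Rightarrow> 'a measure \<Rightarrow> ('a \<Rightarrow> ereal) \<Rightarrow> 'a \<Rightarrow> ereal" where
  "ext_cond_exp M G Y = (\<lambda>x. enn2ereal (nn_cond_exp M G (\<lambda>y. e2ennreal (Y y)) x)
                            - enn2ereal (nn_cond_exp M G (\<lambda>y. e2ennreal (- Y y)) x))"

definition is_ess_inf :: "'a measure \<Rightarrow> 'a measure \<Rightarrow> ('a \<Rightarrow> ereal) set \<Rightarrow> ('a \<Rightarrow> ereal) \<Rightarrow> bool" where
  "is_ess_inf M G S Z \<longleftrightarrow> Z \<in> borel_measurable G \<and>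
     (\<forall>f\<in>S. AE x in M. Z x \<le> f x) \<and>
     (\<forall>Z'\<in>borel_measurable G. (\<forall>f\<in>S. AE x in M. Z' x \<le> f x) \<longrightarrow> (AE x in M. Z' x \<le> Z x))"

definition ess_inf_rv :: "'a measure \<Rightarrow> 'a measure \<Rightarrow> ('a \<Rightarrow> ereal) set \<Rightarrow> ('a \<Rightarrow> ereal)" where
  "ess_inf_rv M G S = (SOME Z. is_ess_inf M G S Z)"

definition shortfall_rm ::
  "'a measure \<Rightarrow> (real \<Rightarrow> 'a measure) \<Rightarrow> ennreal \<Rightarrow> (real \<Rightarrow> real \<Rightarrow> ereal) \<Rightarrow> (real \<Rightarrow> real \<Rightarrow> real)
    \<Rightarrow> real \<Rightarrow> real \<Rightarrow> ('a \<Rightarrow> real) \<Rightarrow> ('a \<Rightarrow> ereal)" where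
  "shortfall_rm M F p U B t u X =
     ess_inf_rv M (F t)
       ((\<lambda>m x. ereal (m x)) `
         {m. memLp M (F t) p m \<and>
             (AE x in M. ext_cond_exp M (F t) (\<lambda>y. U u (X y + m y)) x \<ge> ereal (B t u))})"

definition concave_ereal :: "(real \<Rightarrow> ereal) \<Rightarrow> bool" where
  "concave_ereal f \<longleftrightarrow> (\<forall>x y (l::real). 0 \<le> l \<and> l \<le> 1 \<longrightarrow>
      ereal l * f x + ereal (1 - l) * f y \<le> f (l * x + (1 - l) * y))"

end

theory Submission
  imports Defs
begin

text \<open>
  The extended conditional
  expectation is monotone and commutes with adding a constant (at least as an inequality), so
  every position m that is acceptable at horizon v is acceptable at horizon u: the acceptance sets
  shrink as the horizon grows, and hence their essential infima grow. When U and B do not depend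
  on the horizon, the acceptance sets, and so the risk measures, coincide. Only monotonicity of U
  (for measurability) is used.

  The essential infimum of a family of extended random variables exists because it is attained
  by the pointwise infimum of a countable subfamily: choose one that minimises the expectation
  of a bounded strictly increasing transform of its infimum.
\<close>

lemma e2ennreal_shift_le:
  fixes y1 y2 :: ereal and a b :: real
  assumes "0 \<le> a" "0 \<le> b" "y2 + ereal (a - b) \<le> y1"
  shows "e2ennreal y2 + e2ennreal (- y1) + ennreal a \<le> e2ennreal y1 + e2ennreal (- y2) + ennreal b"
    and "e2ennreal y2 \<le> e2ennreal y1 + ennreal b"
  using assms
  by (cases y1; cases y2; auto simp: e2ennreal_neg ennreal_plus_if intro!: ennreal_leI)+

text \<open>The second hypothesis excludes p2 = n2 = \<infinity> with p1 finite, where the left-hand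
  side would be the junk value \<infinity> - \<infinity> = \<infinity>.\<close>

lemma enn2ereal_diff_shift_le:
  fixes p1 n1 p2 n2 :: ennreal and a b :: real
  assumes "0 \<le> a" "0 \<le> b"
    and "p2 + n1 + ennreal a \<le> p1 + n2 + ennreal b"
    and "p2 \<le> p1 + ennreal b"
  shows "enn2ereal p2 - enn2ereal n2 + ereal (a - b) \<le> enn2ereal p1 - enn2ereal n1"
  using assms
  by (cases p1 rule: ennreal_cases; cases p2 rule: ennreal_cases; cases n1 rule: ennreal_cases;
      cases n2 rule: ennreal_cases) (auto simp flip: ennreal_plus simp: ennreal_le_iff top_unique)

lemma ereal_diff_le_diff_iff_add_le:
  fixes a b :: ereal
  shows "b - ereal d \<le> a - ereal c \<longleftrightarrow> b + ereal (c - d) \<le> a"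
  by (cases a; cases b) auto

context sigma_finite_subalgebra
begin

lemma nn_cond_exp_add_const:
  assumes [measurable]: "f \<in> borel_measurable M"
  shows "AE x in M. nn_cond_exp M F (\<lambda>y. f y + c) x = nn_cond_exp M F f x + c"
  using nn_cond_exp_sum[of f "\<lambda>_. c"] nn_cond_exp_F_meas[of "\<lambda>_. c"] by auto

lemma nn_cond_exp_le_add_const:
  assumes [measurable]: "f \<in> borel_measurable M" "g \<in> borel_measurable M"
    and "\<And>y. f y \<le> g y + c"
  shows "AE x in M. nn_cond_exp M F f x \<le> nn_cond_exp M F g x + c"
  using nn_cond_exp_mono[of f "\<lambda>y. g y + c"] nn_cond_exp_add_const[of g c] assms(3)
  by auto

lemma ext_cond_exp_shift_le:
  assumes [measurable]: "Y1 \<in> borel_measurable M" "Y2 \<in> borel_measurable M"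
    and shift: "\<And>y. Y2 y + ereal c \<le> Y1 y"
  shows "AE x in M. ext_cond_exp M F Y2 x + ereal c \<le> ext_cond_exp M F Y1 x"
proof -
  define a b where "a = max c 0" and "b = max (- c) 0"
  have ab: "0 \<le> a" "0 \<le> b" "c = a - b"
    unfolding a_def b_def by auto
  define P1 P2 N1 N2 where "P1 y = e2ennreal (Y1 y)" and "P2 y = e2ennreal (Y2 y)"
    and "N1 y = e2ennreal (- Y1 y)" and "N2 y = e2ennreal (- Y2 y)" for y
  have [measurable]: "P1 \<in> borel_measurable M" "P2 \<in> borel_measurable M"
    "N1 \<in> borel_measurable M" "N2 \<in> borel_measurable M"
    unfolding P1_def P2_def N1_def N2_def by measurable
  have pointwise: "P2 y + N1 y + ennreal a \<le> P1 y + N2 y + ennreal b"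
      "P2 y \<le> P1 y + ennreal b" for y
    using e2ennreal_shift_le[OF ab(1,2), of "Y2 y" "Y1 y"] shift[of y]
    unfolding P1_def P2_def N1_def N2_def ab(3) by auto
  let ?E = "nn_cond_exp M F"
  have "AE x in M. ?E (\<lambda>y. P2 y + (N1 y + ennreal a)) x \<le> ?E (\<lambda>y. P1 y + (N2 y + ennreal b)) x"
    by (rule nn_cond_exp_mono) (use pointwise(1) in \<open>auto simp: add.assoc\<close>)
  moreover have "AE x in M. ?E P2 x + ?E (\<lambda>y. N1 y + ennreal a) x = ?E (\<lambda>y. P2 y + (N1 y + ennreal a)) x"
    "AE x in M. ?E P1 x + ?E (\<lambda>y. N2 y + ennreal b) x = ?E (\<lambda>y. P1 y + (N2 y + ennreal b)) x"
    by (rule nn_cond_exp_sum; simp)+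
  moreover have "AE x in M. ?E P2 x \<le> ?E P1 x + ennreal b"
    by (rule nn_cond_exp_le_add_const) (simp_all add: pointwise)
  moreover have "AE x in M. ?E (\<lambda>y. N1 y + ennreal a) x = ?E N1 x + ennreal a"
    "AE x in M. ?E (\<lambda>y. N2 y + ennreal b) x = ?E N2 x + ennreal b"
    by (rule nn_cond_exp_add_const; simp)+
  ultimately show ?thesis
  proof eventually_elim
    case (elim x)
    then show ?case
      unfolding ext_cond_exp_def ab(3)
      by (fold P1_def P2_def N1_def N2_def, intro enn2ereal_diff_shift_le[OF ab(1,2)])
        (auto simp: add.assoc)
  qed
qed

end

definition arctan_ereal :: "ereal \<Rightarrow> real" where
  "arctan_ereal x = (if x = \<infinity> then pi / 2 else if x = - \<infinity> then - (pi / 2) else arctan (real_of_ereal x))"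

lemma borel_measurable_arctan_ereal[measurable]: "arctan_ereal \<in> borel_measurable borel"
  unfolding arctan_ereal_def by measurable

lemma strict_mono_arctan_ereal: "strict_mono arctan_ereal"
proof (rule strict_monoI)
  fix x y :: ereal assume "x < y"
  then show "arctan_ereal x < arctan_ereal y"
    using arctan_ubound[of "real_of_ereal x"] arctan_lbound[of "real_of_ereal y"]
    by (cases x; cases y) (auto simp: arctan_ereal_def arctan_less_iff)
qed

lemma abs_arctan_ereal_le: "\<bar>arctan_ereal x\<bar> \<le> pi / 2"
  using arctan_lbound[of "real_of_ereal x"] arctan_ubound[of "real_of_ereal x"]
  by (auto simp: arctan_ereal_def)

lemma countable_subset_minimizer:
  fixes J :: "'b set \<Rightarrow> real"
  assumes bdd: "\<And>C. countable C \<Longrightarrow> C \<subseteq> S \<Longrightarrow> c \<le> J C"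
    and anti: "\<And>C D. countable D \<Longrightarrow> D \<subseteq> S \<Longrightarrow> C \<subseteq> D \<Longrightarrow> J D \<le> J C"
  obtains C where "countable C" "C \<subseteq> S" "\<And>D. countable D \<Longrightarrow> D \<subseteq> S \<Longrightarrow> J C \<le> J D"
proof -
  define \<A> where "\<A> = {C. countable C \<and> C \<subseteq> S}"
  define \<alpha> where "\<alpha> = Inf (J ` \<A>)"
  have "{} \<in> \<A>" and bdd_J: "bdd_below (J ` \<A>)"
    using bdd unfolding \<A>_def bdd_below_def by auto
  have "\<exists>C\<in>\<A>. J C < \<alpha> + 1 / Suc n" for n :: nat
    using cInf_lessD[of "J ` \<A>" "\<alpha> + 1 / Suc n"] \<open>{} \<in> \<A>\<close> unfolding \<alpha>_def by auto
  then obtain Cs where Cs: "\<And>n. Cs n \<in> \<A>" "\<And>n. J (Cs n) < \<alpha> + 1 / Suc n"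
    by metis
  define C where "C = (\<Union>n. Cs n)"
  have C: "countable C" "C \<subseteq> S"
    using Cs(1) unfolding C_def \<A>_def by auto
  have "J C \<le> \<alpha>"
  proof (rule field_le_epsilon)
    fix e :: real assume "0 < e"
    then obtain n :: nat where "1 / Suc n < e" by (rule nat_approx_posE)
    moreover have "J C \<le> J (Cs n)" using anti[OF C] unfolding C_def by blast
    ultimately show "J C \<le> \<alpha> + e" using Cs(2)[of n] by linarith
  qed
  moreover have "\<alpha> \<le> J D" if "countable D" "D \<subseteq> S" for D
    using that bdd_J unfolding \<alpha>_def \<A>_def by (auto intro: cInf_lower)
  ultimately show thesis using that C by fastforce
qed

lemma integral_le_imp_AE_eq:
  fixes f g :: "'a \<Rightarrow> real"
  assumes "integrable M f" "integrable M g" "\<And>x. f x \<le> g x" "(\<integral>x. g x \<partial>M) \<le> (\<integral>x. f x \<partial>M)"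
  shows "AE x in M. f x = g x"
proof -
  have "(\<integral>x. g x - f x \<partial>M) = 0"
    using assms integral_mono[of M f g] by (simp add: Bochner_Integration.integral_diff)
  then have "AE x in M. g x - f x = 0"
    using assms by (subst integral_nonneg_eq_0_iff_AE[symmetric]) auto
  then show ?thesis by auto
qed

lemma is_ess_inf_exists:
  assumes "prob_space M" "subalgebra M G" "S \<subseteq> borel_measurable G"
  shows "\<exists>Z. is_ess_inf M G S Z"
proof -
  interpret prob_space M by fact
  define g where "g C x = (INF f\<in>C. f x)" for C :: "('a \<Rightarrow> ereal) set" and x
  define J where "J C = (\<integral>x. arctan_ereal (g C x) \<partial>M)" for C
  have g_meas: "g C \<in> borel_measurable G" if "countable C" "C \<subseteq> S" for C
    using that assms(3) unfolding g_def by (intro borel_measurable_INF) auto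
  have int: "integrable M (\<lambda>x. arctan_ereal (g C x))" if "countable C" "C \<subseteq> S" for C
    using measurable_from_subalg[OF assms(2) g_meas[OF that]] abs_arctan_ereal_le
    by (intro integrable_const_bound[where B = "pi / 2"]) auto
  have g_anti: "arctan_ereal (g D x) \<le> arctan_ereal (g C x)" if "C \<subseteq> D" for C D x
    using that strict_mono_arctan_ereal unfolding g_def
    by (auto intro: strict_mono_mono[THEN monoD] INF_superset_mono)
  have J_lb: "- (pi / 2) \<le> J C" if "countable C" "C \<subseteq> S" for C
  proof -
    have "- (pi / 2) \<le> arctan_ereal y" for y
      using abs_arctan_ereal_le[of y] by linarith
    then show ?thesis
      using integral_mono[OF integrable_const int[OF that], of "- (pi / 2)"]
      unfolding J_def by (simp add: prob_space)
  qed
  have J_anti: "J D \<le> J C" if "countable D" "D \<subseteq> S" "C \<subseteq> D" for C D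
    using int that g_anti unfolding J_def by (intro integral_mono) (auto intro: countable_subset)
  obtain C where C: "countable C" "C \<subseteq> S"
    and C_min: "\<And>D. countable D \<Longrightarrow> D \<subseteq> S \<Longrightarrow> J C \<le> J D"
    using countable_subset_minimizer[of S "- (pi / 2)" J, OF J_lb J_anti] by blast
  have "is_ess_inf M G S (g C)"
    unfolding is_ess_inf_def
  proof (intro conjI ballI impI)
    show "g C \<in> borel_measurable G" using g_meas[OF C] .
  next
    fix f assume "f \<in> S"
    with C have C': "countable (insert f C)" "insert f C \<subseteq> S" by auto
    have "AE x in M. arctan_ereal (g (insert f C) x) = arctan_ereal (g C x)"
      using int[OF C'] int[OF C] g_anti[OF subset_insertI] C_min[OF C'] unfolding J_def
      by (intro integral_le_imp_AE_eq) auto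
    then show "AE x in M. g C x \<le> f x"
    proof eventually_elim
      case (elim x)
      then have "min (f x) (g C x) = g C x"
        unfolding strict_mono_eq[OF strict_mono_arctan_ereal] by (simp add: g_def inf_min)
      then show ?case by (simp add: min_def split: if_splits)
    qed
  next
    fix Z' :: "'a \<Rightarrow> ereal"
    assume "\<forall>f\<in>S. AE x in M. Z' x \<le> f x"
    with C have "AE x in M. \<forall>f\<in>C. Z' x \<le> f x"
      by (subst AE_ball_countable) auto
    then show "AE x in M. Z' x \<le> g C x"
      by eventually_elim (simp add: g_def le_INF_iff)
  qed
  then show ?thesis by blast
qed

lemma is_ess_inf_ess_inf_rv:
  assumes "prob_space M" "subalgebra M G" "S \<subseteq> borel_measurable G"
  shows "is_ess_inf M G S (ess_inf_rv M G S)"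
  unfolding ess_inf_rv_def using is_ess_inf_exists[OF assms] by (rule someI_ex)

lemma ess_inf_rv_antimono:
  assumes "prob_space M" "subalgebra M G" "S \<subseteq> borel_measurable G" "S' \<subseteq> S"
  shows "AE x in M. ess_inf_rv M G S x \<le> ess_inf_rv M G S' x"
proof -
  have "is_ess_inf M G S (ess_inf_rv M G S)" "is_ess_inf M G S' (ess_inf_rv M G S')"
    using assms by (auto intro!: is_ess_inf_ess_inf_rv)
  with \<open>S' \<subseteq> S\<close> show ?thesis
    unfolding is_ess_inf_def by blast
qed

lemma borel_measurable_mono_ereal:
  fixes f :: "real \<Rightarrow> ereal"
  assumes "mono f"
  shows "f \<in> borel_measurable borel"
proof (rule borel_measurableI_le)
  fix y
  have "is_interval {x. f x \<le> y}"
    unfolding is_interval_1 using assms by (auto dest: monoD intro: order_trans)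
  then show "{x \<in> space borel. f x \<le> y} \<in> sets borel"
    by (simp add: real_interval_borel_measurable)
qed

lemma shortfall_rm_mono_horizon:
  assumes "prob_space M" "subalgebra M (F t)" "X \<in> borel_measurable M"
    and "mono (U u)" "mono (U v)"
    and shift: "\<And>x. U v x - ereal (B t v) \<le> U u x - ereal (B t u)"
  shows "AE x in M. shortfall_rm M F p U B t u X x \<le> shortfall_rm M F p U B t v X x"
proof -
  interpret sigma_finite_subalgebra M "F t"
    using assms(1,2) by (intro finite_measure_subalgebra_is_sigma_finite)
      (simp add: finite_measure_subalgebra_def finite_measure_subalgebra_axioms_def prob_space_def)
  define acceptable where "acceptable w m \<longleftrightarrow> memLp M (F t) p m \<and>
    (AE x in M. ext_cond_exp M (F t) (\<lambda>y. U w (X y + m y)) x \<ge> ereal (B t w))" for w m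
  have "acceptable u m" if "acceptable v m" for m
  proof -
    have [measurable]: "X \<in> borel_measurable M" "m \<in> borel_measurable M"
      "U u \<in> borel_measurable borel" "U v \<in> borel_measurable borel"
      using assms that measurable_from_subalg[OF subalg]
      by (auto simp: acceptable_def memLp_def intro: borel_measurable_mono_ereal)
    have "AE x in M. ext_cond_exp M (F t) (\<lambda>y. U v (X y + m y)) x + ereal (B t u - B t v)
        \<le> ext_cond_exp M (F t) (\<lambda>y. U u (X y + m y)) x"
      using shift by (intro ext_cond_exp_shift_le) (auto simp: ereal_diff_le_diff_iff_add_le)
    moreover have "AE x in M. ereal (B t v) \<le> ext_cond_exp M (F t) (\<lambda>y. U v (X y + m y)) x"
      using that unfolding acceptable_def by simp
    ultimately have "AE x in M. ereal (B t u) \<le> ext_cond_exp M (F t) (\<lambda>y. U u (X y + m y)) x"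
    proof eventually_elim
      case (elim x)
      have "ereal (B t u) = ereal (B t v) + ereal (B t u - B t v)"
        by simp
      also have "\<dots> \<le> ext_cond_exp M (F t) (\<lambda>y. U v (X y + m y)) x + ereal (B t u - B t v)"
        using elim(2) by (rule add_right_mono)
      also have "\<dots> \<le> ext_cond_exp M (F t) (\<lambda>y. U u (X y + m y)) x"
        by (rule elim(1))
      finally show ?case .
    qed
    with that show ?thesis
      unfolding acceptable_def by simp
  qed
  then have "(\<lambda>m x. ereal (m x)) ` {m. acceptable v m} \<subseteq> (\<lambda>m x. ereal (m x)) ` {m. acceptable u m}"
    by blast
  moreover have "(\<lambda>m x. ereal (m x)) ` {m. acceptable u m} \<subseteq> borel_measurable (F t)"
    by (auto simp: acceptable_def memLp_def)
  ultimately show ?thesis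
    unfolding shortfall_rm_def acceptable_def[abs_def]
    using ess_inf_rv_antimono[OF assms(1,2)] by blast
qed

theorem mainTheorem8:
  fixes M :: "'a measure" and F :: "real \<Rightarrow> 'a measure" and T :: real and p :: ennreal
    and U :: "real \<Rightarrow> real \<Rightarrow> ereal" and B :: "real \<Rightarrow> real \<Rightarrow> real"
  assumes prob: "prob_space M"
    and T_nonneg: "0 \<le> T"
    and filt_sub: "\<And>t. 0 \<le> t \<Longrightarrow> t \<le> T \<Longrightarrow> subalgebra M (F t)"
    and filt_mono: "\<And>s t. 0 \<le> s \<Longrightarrow> s \<le> t \<Longrightarrow> t \<le> T \<Longrightarrow> sets (F s) \<subseteq> sets (F t)"
    and p_ge: "1 \<le> p"
    and U_conc: "\<And>u. 0 \<le> u \<Longrightarrow> u \<le> T \<Longrightarrow> concave_ereal (U u)"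
    and U_mono: "\<And>u. 0 \<le> u \<Longrightarrow> u \<le> T \<Longrightarrow> mono (U u)"
    and U_lt_top: "\<And>u x. 0 \<le> u \<Longrightarrow> u \<le> T \<Longrightarrow> U u x < \<infinity>"
    and U_not_bot: "\<And>u. 0 \<le> u \<Longrightarrow> u \<le> T \<Longrightarrow> \<exists>x. U u x \<noteq> -\<infinity>"
    and hyp: "\<And>t u v x. 0 \<le> t \<Longrightarrow> t \<le> u \<Longrightarrow> u \<le> v \<Longrightarrow> v \<le> T \<Longrightarrow>
                 U v x - ereal (B t v) \<le> U u x - ereal (B t u)"
  shows "(\<forall>t u v X. 0 \<le> t \<and> t \<le> u \<and> u \<le> v \<and> v \<le> T \<and> memLp M (F u) p X \<longrightarrow>
            (AE x in M. shortfall_rm M F p U B t v X x \<ge> shortfall_rm M F p U B t u X x))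
       \<and> ((\<forall>u v. 0 \<le> u \<and> u \<le> T \<and> 0 \<le> v \<and> v \<le> T \<longrightarrow> U u = U v) \<and>
          (\<forall>t u v. 0 \<le> t \<and> t \<le> u \<and> u \<le> T \<and> t \<le> v \<and> v \<le> T \<longrightarrow> B t u = B t v)
          \<longrightarrow> (\<forall>t u v X. 0 \<le> t \<and> t \<le> u \<and> u \<le> v \<and> v \<le> T \<and> memLp M (F u) p X \<longrightarrow>
            (AE x in M. shortfall_rm M F p U B t u X x = shortfall_rm M F p U B t v X x)))"
proof (intro conjI allI impI)
  fix t u v X
  assume "0 \<le> t \<and> t \<le> u \<and> u \<le> v \<and> v \<le> T \<and> memLp M (F u) p X"
  then have tuv: "0 \<le> t" "t \<le> u" "u \<le> v" "v \<le> T" and "memLp M (F u) p X"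
    by auto
  then have "X \<in> borel_measurable M"
    using measurable_from_subalg[OF filt_sub[of u]] unfolding memLp_def by auto
  with tuv show "AE x in M. shortfall_rm M F p U B t v X x \<ge> shortfall_rm M F p U B t u X x"
    by (intro shortfall_rm_mono_horizon prob filt_sub U_mono hyp) auto
next
  fix t u v X
  assume "(\<forall>u v. 0 \<le> u \<and> u \<le> T \<and> 0 \<le> v \<and> v \<le> T \<longrightarrow> U u = U v) \<and>
          (\<forall>t u v. 0 \<le> t \<and> t \<le> u \<and> u \<le> T \<and> t \<le> v \<and> v \<le> T \<longrightarrow> B t u = B t v)"
    and "0 \<le> t \<and> t \<le> u \<and> u \<le> v \<and> v \<le> T \<and> memLp M (F u) p X"
  then have "U u = U v" "B t u = B t v"
    by auto
  then show "AE x in M. shortfall_rm M F p U B t u X x = shortfall_rm M F p U B t v X x"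
    unfolding shortfall_rm_def by simp
qed

end
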